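(* Consider problem (P) under Assumptions (A1)–(A3) with $\inf_{x\in\mathcal{X}}f(x)>-\infty$, let $x^0\in\mathcal{X}$, and let $\varepsilon>0$. Then the SMIL algorithm terminates after finitely many iterations, returning a point $x^k\in\mathcal{X}$ with $\Psi(x^k;\Delta_k)\le\varepsilon$, i.e. an $\varepsilon$-critical point of (P).
   Context: Problem (P): minimize $f(x)$ subject to $x\in\mathcal{X}:=\bar{\mathcal{X}}\cap\{x\in\mathbb{R}^n : x_i\in\mathbb{Z}\ \forall i\in\mathcal{I}\}$, with $\bar{\mathcal{X}}\subseteq\mathbb{R}^n$ a closed convex polyhedral set, $\mathcal{I}\subseteq\{1,\dots,n\}$, $\mathcal{X}\ne\emptyset$, $f:\mathbb{R}^n\to\mathbb{R}$. Write $x=(u,z)$ with $u$ the components with indices not in $\mathcal{I}$ and $z$ those in $\mathcal{I}$. Assumptions: (A1) $f$ is $C^1$ with locally Lipschitz gradient; (A2) $f(u,z)=f_1(u)+\langle f_2,z\rangle$; (A3) the feasible integer parts $\{z:(u,z)\in\mathcal{X}\}$ form a bounded set. $\|x\|_{PL}$ is the $\ell_1$- or $\ell_\infty$-norm of the components with indices not in $\mathcal{I}$; $\mathbb{B}_{PL}(x,\Delta):=\{w:\|w-x\|_{PL}\le\Delta\}$. Criticality measure: $\Psi(x;\Delta):=\max\{\langle\nabla f(x),x-w\rangle : w\in\mathcal{X}\cap\mathbb{B}_{PL}(x,\Delta)\}$; $\bar x\in\mathcal{X}$ is $\varepsilon$-$\Delta$-critical if $\Psi(\bar x;\Delta)\le\varepsilon$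 and $\varepsilon$-critical if it is $\varepsilon$-$\Delta$-critical for some $\Delta>0$. SMIL algorithm. Input $x^0\in\mathcal{X}$, $\varepsilon\ge0$; parameters $\Delta_0>0$, $\varrho,\kappa\in(0,1)$, $\kappa_m\in(0,1]$. Set $m_0:=f(x^0)$. For $k=0,1,2,\dots$: (S1) compute $x^{k+1}\in\arg\min\{\langle\nabla f(x^k),x\rangle : x\in\mathcal{X}\cap\mathbb{B}_{PL}(x^k,\Delta_k)\}$; (S2) set $a_k:=m_k-f(x^{k+1})$ and $\Psi_k:=\langle\nabla f(x^k),x^k-x^{k+1}\rangle$ (so $\Psi_k=\Psi(x^k;\Delta_k)$); (S3) if $\Psi_k\le\varepsilon$, return $x^k$; (S4) if $a_k<\varrho\Psi_k$, set $\Delta_k\leftarrow\kappa\Delta_k$ and go back to (S1); (S5) set $m_{k+1}:=(1-\kappa_m)m_k+\kappa_m f(x^{k+1})$; (S6) choose $\Delta_{k+1}$ either by the rule $\Delta_{k+1}=\kappa\Delta_k$ if $\rho_k<\varrho_1$, $=\Delta_k$ if $\varrho_1\le\rho_k<\varrho_2$, $=\Delta_k/\kappa$ if $\rho_k\ge\varrho_2$, where $\rho_k:=a_k/\Psi_k$ and $\varrho\le\varrho_1<\varrho_2<1$; or by a reset $\Delta_{k+1}\in[\Delta_{\min},\Delta_{\max}]$, $0<\Delta_{\min}\le\Delta_{\max}$. *)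

theory Defs
  imports "HOL-Analysis.Analysis"
begin

text \<open>Points of R^n are vectors real^'n; I is the set of integer-constrained indices.
  The flag l1 selects the l1-norm (True) or the l-infinity-norm (False) on the
  components with indices not in I.\<close>

definition plnorm :: "bool \<Rightarrow> 'n::finite set \<Rightarrow> real^'n \<Rightarrow> real" where
  "plnorm l1 I x =
     (if l1 then (\<Sum>i\<in>UNIV - I. \<bar>x$i\<bar>)
      else Max (insert 0 ((\<lambda>i. \<bar>x$i\<bar>) ` (UNIV - I))))"

definition plball :: "bool \<Rightarrow> 'n::finite set \<Rightarrow> real^'n \<Rightarrow> real \<Rightarrow> (real^'n) set" where
  "plball l1 I x \<Delta> = {w. plnorm l1 I (w - x) \<le> \<Delta>}"

definition feasible :: "(real^'n::finite) set \<Rightarrow> 'n set \<Rightarrow> (real^'n) set" where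
  "feasible Xbar I = Xbar \<inter> {x. \<forall>i\<in>I. x$i \<in> \<int>}"

definition Psi :: "(real^'n::finite \<Rightarrow> real^'n) \<Rightarrow> (real^'n) set \<Rightarrow> bool \<Rightarrow> 'n set
                   \<Rightarrow> real^'n \<Rightarrow> real \<Rightarrow> real" where
  "Psi g X l1 I x \<Delta> = (SUP w \<in> X \<inter> plball l1 I x \<Delta>. g x \<bullet> (x - w))"

definition sub_argmin :: "(real^'n::finite \<Rightarrow> real^'n) \<Rightarrow> (real^'n) set \<Rightarrow> bool \<Rightarrow> 'n set
                   \<Rightarrow> real^'n \<Rightarrow> real \<Rightarrow> (real^'n) set" where
  "sub_argmin g X l1 I x \<Delta> =
     {y \<in> X \<inter> plball l1 I x \<Delta>. \<forall>w \<in> X \<inter> plball l1 I x \<Delta>. g x \<bullet> y \<le> g x \<bullet> w}"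

text \<open>One step of SMIL on the state (x_k, m_k, Delta_k): either an unsuccessful trial
  (S4: Delta_k is shrunk) or an accepted iteration (S5, S6 with the update rule or a reset).
  A step is only possible if the stopping test (S3) fails; the algorithm stops (returns x_k)
  exactly in states without successor.\<close>
fun smil_step :: "(real^'n::finite \<Rightarrow> real) \<Rightarrow> (real^'n \<Rightarrow> real^'n) \<Rightarrow> (real^'n) set \<Rightarrow> bool
      \<Rightarrow> 'n set \<Rightarrow> real \<Rightarrow> real \<Rightarrow> real \<Rightarrow> real \<Rightarrow> real \<Rightarrow> real \<Rightarrow> real \<Rightarrow> real
      \<Rightarrow> ((real^'n) \<times> real \<times> real) \<Rightarrow> ((real^'n) \<times> real \<times> real) \<Rightarrow> bool" where
  "smil_step f g X l1 I \<epsilon> \<rho> \<kappa> \<kappa>m \<rho>1 \<rho>2 \<Delta>min \<Delta>max (x, m, \<Delta>) (x', m', \<Delta>') \<longleftrightarrow>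
     (\<exists>y \<in> sub_argmin g X l1 I x \<Delta>.
        let \<Psi> = g x \<bullet> (x - y); a = m - f y in
        \<epsilon> < \<Psi> \<and>
        ((a < \<rho> * \<Psi> \<and> x' = x \<and> m' = m \<and> \<Delta>' = \<kappa> * \<Delta>) \<or>
         (\<rho> * \<Psi> \<le> a \<and> x' = y \<and> m' = (1 - \<kappa>m) * m + \<kappa>m * f y \<and>
          (\<Delta>' = (if a / \<Psi> < \<rho>1 then \<kappa> * \<Delta> else if a / \<Psi> < \<rho>2 then \<Delta> else \<Delta> / \<kappa>)
           \<or> (\<Delta>min \<le> \<Delta>' \<and> \<Delta>' \<le> \<Delta>max)))))"

end

theory Submission imports Defs begin

text \<open>The merit values m_k never increase and every accepted iteration lowers them by at least
  \<kappa>m \<rho> \<epsilon>, so, f being bounded below on the feasible set, from some iteration on all trials are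
  rejected: the iterate stays fixed while the radius shrinks geometrically.  But a rejected
  trial with \<Psi> > \<epsilon> is impossible for small radii: by (A2) f is affine in the integer
  variables, so the first-order model of f is accurate up to o(\<Delta>) on the whole box
  B_PL(x, \<Delta>), which forces f(y) \<le> f(x) - \<rho> \<Psi>.  A state
  without successor has \<Psi> \<le> \<epsilon>, since otherwise one of the two branches of the step
  applies to a minimiser of the subproblem, which exists because (A3) makes the subproblem
  region compact.\<close>

lemma plnorm_nonneg: "0 \<le> plnorm l1 I (v::real^'n::finite)"
  unfolding plnorm_def by (auto intro: sum_nonneg Max_ge)

lemma plnorm_zero [simp]: "plnorm l1 I (0::real^'n::finite) = 0"
  unfolding plnorm_def by (auto simp: image_constant_conv)

lemma abs_component_le_plnorm: "i \<notin> I \<Longrightarrow> \<bar>v$i\<bar> \<le> plnorm l1 I (v::real^'n::finite)"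
  unfolding plnorm_def by (auto intro!: member_le_sum Max_ge)

lemma plnorm_cong: "(\<And>i. i \<notin> I \<Longrightarrow> v$i = w$i) \<Longrightarrow> plnorm l1 I (v::real^'n::finite) = plnorm l1 I w"
  unfolding plnorm_def by (auto intro!: sum.cong image_cong)

lemma norm_le_card_plnorm:
  assumes "\<forall>i\<in>I. v$i = 0"
  shows "norm (v::real^'n::finite) \<le> real CARD('n) * plnorm l1 I v"
proof -
  have "norm v \<le> (\<Sum>i\<in>UNIV. \<bar>v$i\<bar>)" by (rule norm_le_l1_cart)
  also have "\<dots> \<le> (\<Sum>i\<in>(UNIV::'n set). plnorm l1 I v)"
    by (intro sum_mono) (metis assms abs_component_le_plnorm plnorm_nonneg abs_zero)
  finally show ?thesis by simp
qed

lemma centre_mem_plball: "0 \<le> \<Delta> \<Longrightarrow> x \<in> plball l1 I (x::real^'n::finite) \<Delta>"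
  unfolding plball_def by simp

lemma closed_plball: "closed (plball l1 I (x::real^'n::finite) \<Delta>)"
proof (cases l1)
  case True
  then show ?thesis unfolding plball_def plnorm_def
    by (auto intro!: closed_Collect_le continuous_intros)
next
  case False
  then have "plball l1 I x \<Delta> = {w. 0 \<le> \<Delta>} \<inter> (\<Inter>i\<in>UNIV - I. {w. \<bar>w$i - x$i\<bar> \<le> \<Delta>})"
    unfolding plball_def plnorm_def by auto
  moreover have "closed ({w::real^'n. 0 \<le> \<Delta>} \<inter> (\<Inter>i\<in>UNIV - I. {w. \<bar>w$i - x$i\<bar> \<le> \<Delta>}))"
    by (intro closed_Int closed_INT ballI closed_Collect_le continuous_intros)
  ultimately show ?thesis by simp
qed

lemma closed_feasible: "closed Xbar \<Longrightarrow> closed (feasible Xbar (I::'n::finite set))"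
proof -
  assume "closed Xbar"
  moreover have "{x::real^'n. \<forall>i\<in>I. x$i \<in> \<int>} = (\<Inter>i\<in>I. (\<lambda>x. x$i) -` \<int>)" by auto
  moreover have "closed (\<Inter>i\<in>I. (\<lambda>x::real^'n. x$i) -` \<int>)"
    by (intro closed_INT ballI closed_vimage_vec_nth closed_Ints)
  ultimately show ?thesis unfolding feasible_def by auto
qed

lemma bounded_Int_plball:
  assumes "\<forall>x\<in>X. \<forall>i\<in>I. \<bar>x$i\<bar> \<le> B"
  shows "bounded (X \<inter> plball l1 I (x::real^'n::finite) \<Delta>)"
proof -
  have "norm w \<le> (\<Sum>i\<in>UNIV. \<bar>B\<bar> + \<bar>x$i\<bar> + \<bar>\<Delta>\<bar>)" if w: "w \<in> X \<inter> plball l1 I x \<Delta>" for w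
  proof -
    have "\<bar>w$i\<bar> \<le> \<bar>B\<bar> + \<bar>x$i\<bar> + \<bar>\<Delta>\<bar>" for i
    proof (cases "i \<in> I")
      case True
      then show ?thesis using assms w by force
    next
      case False
      then have "\<bar>(w - x)$i\<bar> \<le> \<Delta>"
        using abs_component_le_plnorm[of i I "w - x" l1] w unfolding plball_def by auto
      then show ?thesis by simp
    qed
    then have "(\<Sum>i\<in>UNIV. \<bar>w$i\<bar>) \<le> (\<Sum>i\<in>UNIV. \<bar>B\<bar> + \<bar>x$i\<bar> + \<bar>\<Delta>\<bar>)"
      by (intro sum_mono)
    with norm_le_l1_cart[of w] show ?thesis by linarith
  qed
  then show ?thesis unfolding bounded_iff by blast
qed

lemma compact_feasible_Int_plball:
  assumes "polyhedron Xbar" and "\<forall>x\<in>feasible Xbar I. \<forall>i\<in>I. \<bar>x$i\<bar> \<le> B"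
  shows "compact (feasible Xbar I \<inter> plball l1 I (x::real^'n::finite) \<Delta>)"
  using assms closed_feasible[OF polyhedron_imp_closed] closed_plball bounded_Int_plball
  by (metis closed_Int compact_eq_bounded_closed)

lemma inner_eq_slope_if_affine_on_line:
  fixes f :: "'a::real_inner \<Rightarrow> real"
  assumes der: "(f has_derivative (\<lambda>h. G \<bullet> h)) (at x)"
    and line: "\<And>t. f (x + t *\<^sub>R e) = f x + t * K"
  shows "G \<bullet> e = K"
proof -
  have "((\<lambda>t::real. x + t *\<^sub>R e) has_derivative (\<lambda>s. s *\<^sub>R e)) (at 0)"
    by (auto intro!: derivative_eq_intros)
  moreover have "(f has_derivative (\<lambda>h. G \<bullet> h)) (at ((\<lambda>t::real. x + t *\<^sub>R e) 0))"
    using der by simp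
  ultimately have "((f \<circ> (\<lambda>t. x + t *\<^sub>R e)) has_derivative ((\<lambda>h. G \<bullet> h) \<circ> (\<lambda>s. s *\<^sub>R e))) (at 0)"
    by (rule diff_chain_at)
  then have "((\<lambda>t. f (x + t *\<^sub>R e)) has_derivative (\<lambda>s. s * (G \<bullet> e))) (at 0)"
    by (simp add: o_def)
  moreover have "((\<lambda>t. f (x + t *\<^sub>R e)) has_derivative (\<lambda>s. s * K)) (at 0)"
    unfolding line by (auto intro!: derivative_eq_intros)
  ultimately have "(\<lambda>s. s * (G \<bullet> e)) = (\<lambda>s. s * K)"
    by (rule has_derivative_unique)
  then show ?thesis by (metis mult_1)
qed

lemma first_order_error_eq_continuous_part:
  fixes f :: "real^'n::finite \<Rightarrow> real" and x y :: "real^'n"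
  assumes f1: "\<forall>x y. (\<forall>i. i \<notin> I \<longrightarrow> x$i = y$i) \<longrightarrow> f1 x = f1 y"
    and f_eq: "\<forall>x. f x = f1 x + (\<Sum>i\<in>I. c$i * x$i)"
    and der: "(f has_derivative (\<lambda>h. G \<bullet> h)) (at x)"
  defines "y' \<equiv> \<chi> i. if i \<in> I then x$i else y$i"
  shows "f y - f x - G \<bullet> (y - x) = f y' - f x - G \<bullet> (y' - x)"
proof -
  have shift: "f (w + t *\<^sub>R (y - y')) = f w + t * (\<Sum>i\<in>I. c$i * (y - y')$i)" for w t
  proof -
    have "f1 (w + t *\<^sub>R (y - y')) = f1 w" using f1 by (simp add: y'_def)
    moreover have "(\<Sum>i\<in>I. c$i * (w + t *\<^sub>R (y - y'))$i)
        = (\<Sum>i\<in>I. c$i * w$i + t * (c$i * (y - y')$i))"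
      by (simp add: algebra_simps)
    ultimately show ?thesis
      using f_eq by (simp add: sum.distrib sum_distrib_left)
  qed
  have "G \<bullet> (y - y') = (\<Sum>i\<in>I. c$i * (y - y')$i)"
    using der shift by (rule inner_eq_slope_if_affine_on_line)
  moreover have "f y = f y' + (\<Sum>i\<in>I. c$i * (y - y')$i)"
    using shift[of y' 1] by simp
  moreover have "y - x = (y' - x) + (y - y')" by simp
  ultimately show ?thesis by (simp only: inner_add_right)
qed

lemma Psi_le_of_sub_argmin:
  assumes "y \<in> sub_argmin g X l1 I x \<Delta>"
  shows "Psi g X l1 I x \<Delta> \<le> g x \<bullet> (x - y)"
  using assms unfolding Psi_def sub_argmin_def
  by (intro cSUP_least) (auto simp: inner_diff_right)

lemma sub_argmin_nonempty:
  assumes "compact (X \<inter> plball l1 I x \<Delta>)" and "x \<in> X" and "0 \<le> \<Delta>"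
  obtains y where "y \<in> sub_argmin g X l1 I x \<Delta>"
proof -
  have "x \<in> X \<inter> plball l1 I x \<Delta>" using assms centre_mem_plball by blast
  moreover have "continuous_on (X \<inter> plball l1 I x \<Delta>) (\<lambda>w. g x \<bullet> w)"
    by (intro continuous_intros)
  ultimately obtain y where "y \<in> X \<inter> plball l1 I x \<Delta>"
    and "\<forall>w\<in>X \<inter> plball l1 I x \<Delta>. g x \<bullet> y \<le> g x \<bullet> w"
    using continuous_attains_inf[OF assms(1)] by blast
  then show ?thesis using that unfolding sub_argmin_def by blast
qed

lemma smil_stepE:
  assumes "smil_step f g X l1 I \<epsilon> \<rho> \<kappa> \<kappa>m \<rho>1 \<rho>2 \<Delta>min \<Delta>max (x, m, \<Delta>) (x', m', \<Delta>')"
  obtains (rejected) y where "y \<in> sub_argmin g X l1 I x \<Delta>" "\<epsilon> < g x \<bullet> (x - y)"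
      "m - f y < \<rho> * (g x \<bullet> (x - y))" "x' = x" "m' = m" "\<Delta>' = \<kappa> * \<Delta>"
  | (accepted) y where "y \<in> sub_argmin g X l1 I x \<Delta>" "\<epsilon> < g x \<bullet> (x - y)"
      "\<rho> * (g x \<bullet> (x - y)) \<le> m - f y" "x' = y" "m' = (1 - \<kappa>m) * m + \<kappa>m * f y"
      "\<Delta>' = \<kappa> * \<Delta> \<or> \<Delta>' = \<Delta> \<or> \<Delta>' = \<Delta> / \<kappa> \<or> \<Delta>min \<le> \<Delta>'"
  using assms by (auto simp: Let_def split: if_splits)

lemma decseq_eventually_small_steps:
  fixes u :: "nat \<Rightarrow> real"
  assumes "decseq u" "bdd_below (range u)" "0 < \<delta>"
  shows "\<forall>\<^sub>F k in sequentially. u k - \<delta> < u (Suc k)"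
proof -
  have "u \<longlonglongrightarrow> Inf (range u)" using LIMSEQ_decseq_INF assms by blast
  then have "(\<lambda>k. u (Suc k) - u k) \<longlonglongrightarrow> Inf (range u) - Inf (range u)"
    by (intro tendsto_diff LIMSEQ_Suc)
  then have "\<forall>\<^sub>F k in sequentially. - \<delta> < u (Suc k) - u k"
    using assms(3) by (intro order_tendstoD(1)) auto
  then show ?thesis by eventually_elim simp
qed

locale smil =
  fixes f :: "real^'n::finite \<Rightarrow> real" and g :: "real^'n \<Rightarrow> real^'n"
    and X :: "(real^'n) set" and I :: "'n set" and l1 :: bool
    and \<epsilon> \<rho> \<kappa> \<kappa>m \<rho>1 \<rho>2 \<Delta>min \<Delta>max :: real
  assumes f_grad: "\<forall>x. (f has_derivative (\<lambda>h. g x \<bullet> h)) (at x)"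
    and A2: "\<exists>f1 :: real^'n \<Rightarrow> real. \<exists>c :: real^'n.
               (\<forall>x y. (\<forall>i. i \<notin> I \<longrightarrow> x$i = y$i) \<longrightarrow> f1 x = f1 y) \<and>
               (\<forall>x. f x = f1 x + (\<Sum>i\<in>I. c$i * x$i))"
    and compact_region: "\<And>x \<Delta>. compact (X \<inter> plball l1 I x \<Delta>)"
    and eps_pos: "0 < \<epsilon>"
    and params: "0 < \<rho>" "\<rho> < 1" "0 < \<kappa>" "\<kappa> < 1" "0 < \<kappa>m" "\<kappa>m \<le> 1"
      "0 < \<Delta>min" "\<Delta>min \<le> \<Delta>max"
begin

abbreviation step where "step \<equiv> smil_step f g X l1 I \<epsilon> \<rho> \<kappa> \<kappa>m \<rho>1 \<rho>2 \<Delta>min \<Delta>max"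

definition rejected_trial :: "real^'n \<Rightarrow> real \<Rightarrow> real \<Rightarrow> bool" where
  "rejected_trial x m \<Delta> \<longleftrightarrow>
     (\<exists>y\<in>sub_argmin g X l1 I x \<Delta>. \<epsilon> < g x \<bullet> (x - y) \<and> m - f y < \<rho> * (g x \<bullet> (x - y)))"

lemma accepted_trial_gain:
  assumes "\<epsilon> < g x \<bullet> (x - y)" and "\<rho> * (g x \<bullet> (x - y)) \<le> m - f y"
  shows "\<rho> * \<epsilon> \<le> m - f y"
  using assms mult_strict_left_mono[OF assms(1) params(1)] by linarith

lemma step_invariant:
  assumes "step (x, m, \<Delta>) (x', m', \<Delta>')" and "x \<in> X" "f x \<le> m" "0 < \<Delta>"
  shows "x' \<in> X \<and> f x' \<le> m' \<and> 0 < \<Delta>'"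
  using assms(1)
proof (cases rule: smil_stepE)
  case rejected
  then show ?thesis using assms params by auto
next
  case (accepted y)
  have "0 < \<rho> * \<epsilon>" using eps_pos params by simp
  then have "0 \<le> (1 - \<kappa>m) * (m - f y)"
    using accepted_trial_gain[OF accepted(2,3)] params by simp
  then have "f y \<le> m'" using accepted by (simp add: algebra_simps)
  moreover have "y \<in> X" using accepted unfolding sub_argmin_def by blast
  moreover have "0 < \<Delta>'" using accepted assms params by auto
  ultimately show ?thesis using accepted by simp
qed

lemma step_merit_nonincreasing:
  assumes "step (x, m, \<Delta>) (x', m', \<Delta>')"
  shows "m' \<le> m"
  using assms
proof (cases rule: smil_stepE)
  case (accepted y)
  have "0 < \<rho> * \<epsilon>" using eps_pos params by simp
  then have "0 \<le> \<kappa>m * (m - f y)"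
    using accepted_trial_gain[OF accepted(2,3)] params by simp
  then show ?thesis using accepted by (simp add: algebra_simps)
qed simp

lemma step_without_sufficient_decrease_is_rejected:
  assumes "step (x, m, \<Delta>) (x', m', \<Delta>')" and "m - \<kappa>m * \<rho> * \<epsilon> < m'"
  shows "rejected_trial x m \<Delta> \<and> x' = x \<and> m' = m \<and> \<Delta>' = \<kappa> * \<Delta>"
  using assms(1)
proof (cases rule: smil_stepE)
  case (rejected y)
  then show ?thesis unfolding rejected_trial_def by blast
next
  case (accepted y)
  have "\<kappa>m * (\<rho> * \<epsilon>) \<le> \<kappa>m * (m - f y)"
    using accepted_trial_gain[OF accepted(2,3)] params by simp
  then show ?thesis using accepted assms(2) by (simp add: algebra_simps)
qed

lemma step_exists_if_not_critical:
  assumes "x \<in> X" "0 < \<Delta>" "\<epsilon> < Psi g X l1 I x \<Delta>"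
  shows "\<exists>c. step (x, m, \<Delta>) c"
proof -
  obtain y where y: "y \<in> sub_argmin g X l1 I x \<Delta>"
    using sub_argmin_nonempty[OF compact_region] assms by (metis less_imp_le)
  have gt: "\<epsilon> < g x \<bullet> (x - y)" using Psi_le_of_sub_argmin[OF y] assms(3) by linarith
  show ?thesis
  proof (cases "m - f y < \<rho> * (g x \<bullet> (x - y))")
    case True
    then have "step (x, m, \<Delta>) (x, m, \<kappa> * \<Delta>)"
      unfolding smil_step.simps Let_def using y gt by blast
    then show ?thesis ..
  next
    case False
    then have "step (x, m, \<Delta>) (y, (1 - \<kappa>m) * m + \<kappa>m * f y, \<Delta>min)"
      unfolding smil_step.simps Let_def using gt params(8) by (intro bexI[OF _ y]) simp
    then show ?thesis ..
  qed
qed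

lemma small_radius_not_rejected:
  assumes "f x \<le> m"
  shows "\<exists>D>0. \<forall>\<Delta><D. \<not> rejected_trial x m \<Delta>"
proof -
  obtain f1 c where f1: "\<forall>x y. (\<forall>i. i \<notin> I \<longrightarrow> x$i = y$i) \<longrightarrow> f1 x = f1 y"
    and f_eq: "\<forall>x. f x = f1 x + (\<Sum>i\<in>I. c$i * x$i)" using A2 by blast
  have der: "(f has_derivative (\<lambda>h. g x \<bullet> h)) (at x)" using f_grad by blast
  then obtain d where d: "d > 0" and
    taylor: "\<forall>z. norm (z - x) < d \<longrightarrow> norm (f z - f x - g x \<bullet> (z - x)) \<le> 1 * norm (z - x)"
    unfolding has_derivative_at_alt by (meson zero_less_one)
  define C where "C = real CARD('n)"
  \<comment> \<open>The continuous part of a step of radius \<Delta> < D has norm at most C \<Delta>, so it lies where the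
    first-order error is bounded by that norm, and this error stays below (1 - \<rho>) \<epsilon>.\<close>
  define D where "D = min d ((1 - \<rho>) * \<epsilon>) / C"
  have C: "C > 0" unfolding C_def by simp
  have "D > 0" unfolding D_def using C d params eps_pos by auto
  moreover have "\<not> rejected_trial x m \<Delta>" if "\<Delta> < D" for \<Delta>
  proof
    assume "rejected_trial x m \<Delta>"
    then obtain y where y: "y \<in> sub_argmin g X l1 I x \<Delta>" and
      gt: "\<epsilon> < g x \<bullet> (x - y)" and lt: "m - f y < \<rho> * (g x \<bullet> (x - y))"
      unfolding rejected_trial_def by blast
    define y' where "y' = (\<chi> i. if i \<in> I then x$i else y$i)"
    have "plnorm l1 I (y' - x) = plnorm l1 I (y - x)"
      by (rule plnorm_cong) (simp add: y'_def)
    then have pl: "plnorm l1 I (y' - x) \<le> \<Delta>"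
      using y unfolding sub_argmin_def plball_def by auto
    have "norm (y' - x) \<le> C * plnorm l1 I (y' - x)"
      unfolding C_def by (rule norm_le_card_plnorm) (simp add: y'_def)
    also have "\<dots> \<le> C * \<Delta>" using pl C by simp
    also have "\<dots> < min d ((1 - \<rho>) * \<epsilon>)" using that C unfolding D_def by (simp add: field_simps)
    finally have small: "norm (y' - x) < min d ((1 - \<rho>) * \<epsilon>)" .
    have "f y - f x - g x \<bullet> (y - x) = f y' - f x - g x \<bullet> (y' - x)"
      using first_order_error_eq_continuous_part[OF f1 f_eq der] unfolding y'_def .
    also have "\<dots> < (1 - \<rho>) * \<epsilon>" using taylor small by fastforce
    also have "\<dots> \<le> (1 - \<rho>) * (g x \<bullet> (x - y))" using gt params by simp
    finally have "\<rho> * (g x \<bullet> (x - y)) < f x - f y" by (simp add: inner_diff_right algebra_simps)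
    then show False using lt assms by linarith
  qed
  ultimately show ?thesis by blast
qed

lemma reachable_invariant:
  assumes "step\<^sup>*\<^sup>* (x0, m0, \<Delta>0) (x, m, \<Delta>)" and "x0 \<in> X" "f x0 \<le> m0" "0 < \<Delta>0"
  shows "x \<in> X \<and> f x \<le> m \<and> 0 < \<Delta>"
  using assms(1)
proof (induction "(x, m, \<Delta>)" arbitrary: x m \<Delta> rule: rtranclp_induct)
  case base
  then show ?case using assms by simp
next
  case (step s)
  then show ?case using step_invariant by (cases s) blast
qed

lemma terminal_state_critical:
  assumes "step\<^sup>*\<^sup>* (x0, f x0, \<Delta>0) (x, m, \<Delta>)" and "x0 \<in> X" "0 < \<Delta>0"
    and final: "\<nexists>c. step (x, m, \<Delta>) c"
  shows "x \<in> X \<and> 0 < \<Delta> \<and> Psi g X l1 I x \<Delta> \<le> \<epsilon>"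
proof -
  have inv: "x \<in> X \<and> f x \<le> m \<and> 0 < \<Delta>"
    using reachable_invariant[OF assms(1,2) order_refl assms(3)] .
  moreover have "Psi g X l1 I x \<Delta> \<le> \<epsilon>"
  proof (rule ccontr)
    assume "\<not> Psi g X l1 I x \<Delta> \<le> \<epsilon>"
    then have "\<exists>c. step (x, m, \<Delta>) c"
      using inv by (intro step_exists_if_not_critical) auto
    then show False using final by blast
  qed
  ultimately show ?thesis by blast
qed

lemma no_infinite_run:
  assumes bdd: "bdd_below (f ` X)" and "x0 \<in> X" "0 < \<Delta>0"
  shows "\<nexists>s. s 0 = (x0, f x0, \<Delta>0) \<and> (\<forall>k. step (s k) (s (Suc k)))"
proof (intro notI, elim exE conjE)
  fix s assume start: "s 0 = (x0, f x0, \<Delta>0)" and run: "\<forall>k. step (s k) (s (Suc k))"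
  define xs where "xs k = fst (s k)" for k
  define ms where "ms k = fst (snd (s k))" for k
  define ds where "ds k = snd (snd (s k))" for k
  have s: "s k = (xs k, ms k, ds k)" for k by (simp add: xs_def ms_def ds_def)
  have steps: "step (xs k, ms k, ds k) (xs (Suc k), ms (Suc k), ds (Suc k))" for k
    using run by (simp only: s)
  have inv: "xs k \<in> X \<and> f (xs k) \<le> ms k \<and> 0 < ds k" for k
  proof (induction k)
    case 0
    then show ?case using start s[of 0] assms by auto
  next
    case (Suc k)
    then show ?case using step_invariant[OF steps[of k]] by blast
  qed
  have "decseq ms" using step_merit_nonincreasing[OF steps] by (rule decseq_SucI)
  moreover have "bdd_below (range ms)"
  proof -
    obtain L where "\<forall>x\<in>X. L \<le> f x" using bdd by (auto simp: bdd_below_def)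
    then show ?thesis using inv by (intro bdd_belowI2[of _ L]) (meson order_trans)
  qed
  ultimately obtain K where K: "\<And>k. K \<le> k \<Longrightarrow> ms k - \<kappa>m * \<rho> * \<epsilon> < ms (Suc k)"
    using decseq_eventually_small_steps[of ms "\<kappa>m * \<rho> * \<epsilon>"] params eps_pos
    unfolding eventually_sequentially by auto
  note rejected = step_without_sufficient_decrease_is_rejected[OF steps K]
  have stuck: "xs (K + j) = xs K \<and> ms (K + j) = ms K \<and> ds (K + j) = \<kappa> ^ j * ds K" for j
  proof (induction j)
    case (Suc j)
    then show ?case using rejected[of "K + j"] by simp
  qed simp
  obtain D where "D > 0" and D: "\<And>\<Delta>. \<Delta> < D \<Longrightarrow> \<not> rejected_trial (xs K) (ms K) \<Delta>"
    using small_radius_not_rejected inv by blast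
  obtain j where "\<kappa> ^ j < D / ds K"
    using real_arch_pow_inv[of "D / ds K" \<kappa>] \<open>D > 0\<close> inv params by auto
  then have "\<kappa> ^ j * ds K < D" using inv by (simp add: pos_less_divide_eq)
  moreover have "rejected_trial (xs K) (ms K) (\<kappa> ^ j * ds K)"
    using rejected[of "K + j"] stuck[of j] by simp
  ultimately show False using D by blast
qed

end

theorem mainTheorem9:
  fixes f :: "real^'n::finite \<Rightarrow> real" and g :: "real^'n \<Rightarrow> real^'n"
    and Xbar :: "(real^'n) set" and I :: "'n set" and l1 :: bool
    and x0 :: "real^'n"
    and \<epsilon> \<Delta>0 \<rho> \<kappa> \<kappa>m \<rho>1 \<rho>2 \<Delta>min \<Delta>max :: real
  assumes poly: "polyhedron Xbar"
    and nonempty: "feasible Xbar I \<noteq> {}"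
    and A1_grad: "\<forall>x. (f has_derivative (\<lambda>h. g x \<bullet> h)) (at x)"
    and A1_cont: "continuous_on UNIV g"
    and A1_lip: "\<forall>x. \<exists>r>0. \<exists>L. \<forall>y\<in>ball x r. \<forall>z\<in>ball x r. norm (g y - g z) \<le> L * norm (y - z)"
    and A2: "\<exists>f1 :: real^'n \<Rightarrow> real. \<exists>c :: real^'n.
               (\<forall>x y. (\<forall>i. i \<notin> I \<longrightarrow> x$i = y$i) \<longrightarrow> f1 x = f1 y) \<and>
               (\<forall>x. f x = f1 x + (\<Sum>i\<in>I. c$i * x$i))"
    and A3: "\<exists>B. \<forall>x\<in>feasible Xbar I. \<forall>i\<in>I. \<bar>x$i\<bar> \<le> B"
    and bdd: "bdd_below (f ` feasible Xbar I)"
    and x0: "x0 \<in> feasible Xbar I"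
    and eps: "\<epsilon> > 0"
    and par: "\<Delta>0 > 0" "0 < \<rho>" "\<rho> < 1" "0 < \<kappa>" "\<kappa> < 1" "0 < \<kappa>m" "\<kappa>m \<le> 1"
             "\<rho> \<le> \<rho>1" "\<rho>1 < \<rho>2" "\<rho>2 < 1" "0 < \<Delta>min" "\<Delta>min \<le> \<Delta>max"
  shows "(\<nexists>s. s 0 = (x0, f x0, \<Delta>0) \<and>
            (\<forall>k. smil_step f g (feasible Xbar I) l1 I \<epsilon> \<rho> \<kappa> \<kappa>m \<rho>1 \<rho>2 \<Delta>min \<Delta>max
                   (s k) (s (Suc k)))) \<and>
         (\<forall>x m \<Delta>.
            (smil_step f g (feasible Xbar I) l1 I \<epsilon> \<rho> \<kappa> \<kappa>m \<rho>1 \<rho>2 \<Delta>min \<Delta>max)\<^sup>*\<^sup>*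
               (x0, f x0, \<Delta>0) (x, m, \<Delta>) \<and>
            (\<nexists>c. smil_step f g (feasible Xbar I) l1 I \<epsilon> \<rho> \<kappa> \<kappa>m \<rho>1 \<rho>2 \<Delta>min \<Delta>max (x, m, \<Delta>) c)
            \<longrightarrow> x \<in> feasible Xbar I \<and> 0 < \<Delta> \<and> Psi g (feasible Xbar I) l1 I x \<Delta> \<le> \<epsilon>)"
proof -
  obtain B where B: "\<forall>x\<in>feasible Xbar I. \<forall>i\<in>I. \<bar>x$i\<bar> \<le> B" using A3 by blast
  interpret smil f g "feasible Xbar I" I l1 \<epsilon> \<rho> \<kappa> \<kappa>m \<rho>1 \<rho>2 \<Delta>min \<Delta>max
    by (unfold_locales; fact A1_grad A2 compact_feasible_Int_plball[OF poly B] eps par(2-7,11,12))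
  show ?thesis
  proof
    show "\<nexists>s. s 0 = (x0, f x0, \<Delta>0) \<and> (\<forall>k. step (s k) (s (Suc k)))"
      by (rule no_infinite_run[OF bdd x0 par(1)])
    show "\<forall>x m \<Delta>. step\<^sup>*\<^sup>* (x0, f x0, \<Delta>0) (x, m, \<Delta>) \<and> (\<nexists>c. step (x, m, \<Delta>) c) \<longrightarrow>
        x \<in> feasible Xbar I \<and> 0 < \<Delta> \<and> Psi g (feasible Xbar I) l1 I x \<Delta> \<le> \<epsilon>"
      using terminal_state_critical[OF _ x0 par(1)] by blast
  qed
qed

end
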